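(* Let $G$ be a finite simple graph containing a leaf (a vertex of degree one), and let $I=I(G)\subset R=K[V(G)]$ be its edge ideal. Then $\operatorname{Ass}(R/I^t)\subset\operatorname{Ass}(R/I^{t+1})$ for all $t\ge1$; that is, the sets of associated primes of the powers of $I$ form an ascending chain.
   Context: $R=K[x_1,\dots,x_n]$ with $K$ a field and the vertices of $G$ identified with the variables; $I(G)$ is generated by the monomials $x_ix_j$ with $\{x_i,x_j\}$ an edge of $G$. $\operatorname{Ass}(M)$ denotes the set of associated primes of an $R$-module $M$. *)

theory Defs
  imports "HOL-Library.Poly_Mapping"
begin

definition is_ideal :: "'a::comm_ring_1 set \<Rightarrow> bool" where
  "is_ideal J \<longleftrightarrow> 0 \<in> J \<and> (\<forall>a\<in>J. \<forall>b\<in>J. a + b \<in> J) \<and> (\<forall>r. \<forall>a\<in>J. r * a \<in> J)"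

definition ideal_gen :: "'a::comm_ring_1 set \<Rightarrow> 'a set" where
  "ideal_gen S = \<Inter>{J. is_ideal J \<and> S \<subseteq> J}"

definition is_prime_ideal :: "'a::comm_ring_1 set \<Rightarrow> bool" where
  "is_prime_ideal P \<longleftrightarrow> is_ideal P \<and> P \<noteq> UNIV \<and> (\<forall>a b. a * b \<in> P \<longrightarrow> a \<in> P \<or> b \<in> P)"

definition ideal_pow :: "'a::comm_ring_1 set \<Rightarrow> nat \<Rightarrow> 'a set" where
  "ideal_pow I t = ideal_gen {prod_list xs | xs. length xs = t \<and> set xs \<subseteq> I}"

text \<open>Associated primes of the module R/J: primes that are the annihilator of
  some element f + J of R/J, i.e. of the form (J : f).\<close>
definition Ass_quot :: "'a::comm_ring_1 set \<Rightarrow> 'a set set" where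
  "Ass_quot J = {P. is_prime_ideal P \<and> (\<exists>f. P = {g. g * f \<in> J})}"

text \<open>Polynomial ring K[x_v : v \<in> V] as finitely supported functions from monomials
  (finitely supported exponent vectors) to coefficients.\<close>
type_synonym ('v, 'k) mpoly = "('v \<Rightarrow>\<^sub>0 nat) \<Rightarrow>\<^sub>0 'k"

definition var :: "'v \<Rightarrow> ('v, 'k::field) mpoly" where
  "var v = Poly_Mapping.single (Poly_Mapping.single v 1) 1"

definition simple_graph :: "'v set set \<Rightarrow> bool" where
  "simple_graph E \<longleftrightarrow> (\<forall>e\<in>E. card e = 2)"

definition degree :: "'v set set \<Rightarrow> 'v \<Rightarrow> nat" where
  "degree E v = card {u. {u, v} \<in> E}"

definition has_leaf :: "'v set set \<Rightarrow> bool" where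
  "has_leaf E \<longleftrightarrow> (\<exists>v. degree E v = 1)"

definition edge_ideal :: "'v set set \<Rightarrow> ('v, 'k::field) mpoly set" where
  "edge_ideal E = ideal_gen {var u * var v | u v. {u, v} \<in> E}"

end

theory Submission
  imports Defs
begin

(* Let a be a leaf of G with unique neighbour b and let I = I(G).
   The key identity is the colon formula  (I^(t+1) : x_a x_b) = I^t.  Given it,
   every associated prime P = (I^t : f) of R/I^t equals (I^(t+1) : f x_a x_b),
   hence is associated to R/I^(t+1).

   The colon formula is proved combinatorially.  Powers of a monomial ideal are
   monomial ideals, and membership in a monomial ideal is decided monomial by
   monomial (each monomial of the support must be divisible by a generator).
   So it suffices to show: if a sum of t+1 edge exponents divides m + e_ab, then
   some t of these summands already divide m.  If e_ab is among the summands we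
   drop it; otherwise no summand involves x_a (a is a leaf), and we drop one
   involving x_b if there is one, and an arbitrary one otherwise. *)

lemma is_ideal_ideal_gen: "is_ideal (ideal_gen S)"
  unfolding ideal_gen_def is_ideal_def by auto

lemma ideal_gen_superset: "S \<subseteq> ideal_gen S"
  unfolding ideal_gen_def by auto

lemma ideal_gen_minimal: "is_ideal J \<Longrightarrow> S \<subseteq> J \<Longrightarrow> ideal_gen S \<subseteq> J"
  unfolding ideal_gen_def by auto

lemma ideal_mult_mem: "is_ideal J \<Longrightarrow> a \<in> J \<Longrightarrow> r * a \<in> J"
  unfolding is_ideal_def by blast

lemma ideal_sum_mem:
  assumes "is_ideal J" "finite A" "\<And>x. x \<in> A \<Longrightarrow> f x \<in> J"
  shows "sum f A \<in> J"
  using assms(2,3) by (induction A rule: finite_induct) (use assms(1) in \<open>auto simp: is_ideal_def\<close>)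

lemma Ass_quot_subset_if_colon:
  fixes J J' :: "'a::comm_ring_1 set"
  assumes colon: "\<And>g. g * c \<in> J' \<longleftrightarrow> g \<in> J"
  shows "Ass_quot J \<subseteq> Ass_quot J'"
proof
  fix P assume "P \<in> Ass_quot J"
  then obtain f where prime: "is_prime_ideal P" and P: "P = {g. g * f \<in> J}"
    unfolding Ass_quot_def by blast
  have "P = {g. g * (f * c) \<in> J'}"
    unfolding P mult.assoc[symmetric] colon ..
  with prime show "P \<in> Ass_quot J'"
    unfolding Ass_quot_def by blast
qed

definition mdvd :: "('v \<Rightarrow>\<^sub>0 nat) \<Rightarrow> ('v \<Rightarrow>\<^sub>0 nat) \<Rightarrow> bool" where
  "mdvd s m \<longleftrightarrow> (\<forall>v. Poly_Mapping.lookup s v \<le> Poly_Mapping.lookup m v)"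

lemma mdvd_refl: "mdvd m m"
  unfolding mdvd_def by simp

lemma mdvd_add_right: "mdvd s m \<Longrightarrow> mdvd s (n + m)"
  unfolding mdvd_def by (simp add: lookup_add trans_le_add2)

lemma mdvd_add_mono: "mdvd s m \<Longrightarrow> mdvd s' m' \<Longrightarrow> mdvd (s + s') (m + m')"
  unfolding mdvd_def by (simp add: lookup_add add_mono)

lemma mdvd_cancel:
  assumes "mdvd (d + r) (m + e)"
    and "\<And>w. Poly_Mapping.lookup e w \<le> Poly_Mapping.lookup d w \<or> Poly_Mapping.lookup r w = 0"
  shows "mdvd r m"
  unfolding mdvd_def
proof
  fix w
  have "Poly_Mapping.lookup d w + Poly_Mapping.lookup r w \<le> Poly_Mapping.lookup m w + Poly_Mapping.lookup e w"
    using assms(1) unfolding mdvd_def lookup_add by blast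
  then show "Poly_Mapping.lookup r w \<le> Poly_Mapping.lookup m w"
    using assms(2)[of w] by linarith
qed

definition monomial_ideal :: "('v \<Rightarrow>\<^sub>0 nat) set \<Rightarrow> ('v, 'k::field) mpoly set" where
  "monomial_ideal S = {p. \<forall>m\<in>Poly_Mapping.keys p. \<exists>s\<in>S. mdvd s m}"

definition monomials :: "('v \<Rightarrow>\<^sub>0 nat) set \<Rightarrow> ('v, 'k::field) mpoly set" where
  "monomials S = {Poly_Mapping.single s 1 | s. s \<in> S}"

lemma is_ideal_monomial_ideal: "is_ideal (monomial_ideal S :: ('v, 'k::field) mpoly set)"
  unfolding is_ideal_def
proof (intro conjI ballI allI)
  show "0 \<in> monomial_ideal S"
    unfolding monomial_ideal_def by simp
next
  fix p q :: "('v, 'k) mpoly" assume "p \<in> monomial_ideal S" "q \<in> monomial_ideal S"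
  then show "p + q \<in> monomial_ideal S"
    using keys_add[of p q] unfolding monomial_ideal_def by blast
next
  fix r p :: "('v, 'k) mpoly" assume p: "p \<in> monomial_ideal S"
  show "r * p \<in> monomial_ideal S"
    unfolding monomial_ideal_def
  proof (intro CollectI ballI)
    fix m assume "m \<in> Poly_Mapping.keys (r * p)"
    then obtain x y where "m = x + y" "y \<in> Poly_Mapping.keys p"
      using keys_mult[of r p] by blast
    with p show "\<exists>s\<in>S. mdvd s m"
      unfolding monomial_ideal_def using mdvd_add_right by blast
  qed
qed

lemma poly_mapping_sum_singles:
  "p = (\<Sum>k\<in>Poly_Mapping.keys p. Poly_Mapping.single k (Poly_Mapping.lookup p k))"
  by (rule poly_mapping_eqI) (simp add: lookup_sum lookup_single when_def in_keys_iff)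

lemma monomials_subset_monomial_ideal: "monomials S \<subseteq> monomial_ideal S"
  unfolding monomials_def monomial_ideal_def mdvd_def by auto

text \<open>A monomial ideal is generated by its monomial generators: every term
  c x^k of a member is a multiple c x^(k - s) x^s of a generator x^s.\<close>

lemma monomial_ideal_subset_ideal_gen: "monomial_ideal S \<subseteq> ideal_gen (monomials S)"
proof
  fix p :: "('a, 'b) mpoly" assume p: "p \<in> monomial_ideal S"
  have "(\<Sum>k\<in>Poly_Mapping.keys p. Poly_Mapping.single k (Poly_Mapping.lookup p k))
          \<in> ideal_gen (monomials S)"
  proof (rule ideal_sum_mem[OF is_ideal_ideal_gen finite_keys])
    fix k assume "k \<in> Poly_Mapping.keys p"
    then obtain s where s: "s \<in> S" "mdvd s k"
      using p unfolding monomial_ideal_def by blast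
    have k_split: "(k - s) + s = k"
      by (rule poly_mapping_eqI) (use s(2) in \<open>auto simp: lookup_add lookup_minus mdvd_def\<close>)
    have split: "Poly_Mapping.single k (Poly_Mapping.lookup p k)
        = Poly_Mapping.single (k - s) (Poly_Mapping.lookup p k) * Poly_Mapping.single s 1"
      by (simp add: mult_single k_split)
    have "Poly_Mapping.single s 1 \<in> monomials S"
      using s(1) unfolding monomials_def by blast
    then have "Poly_Mapping.single s 1 \<in> ideal_gen (monomials S)"
      using ideal_gen_superset by blast
    then show "Poly_Mapping.single k (Poly_Mapping.lookup p k) \<in> ideal_gen (monomials S)"
      unfolding split by (rule ideal_mult_mem[OF is_ideal_ideal_gen])
  qed
  then show "p \<in> ideal_gen (monomials S)"
    using poly_mapping_sum_singles[of p] by metis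
qed

lemma ideal_gen_monomials: "ideal_gen (monomials S) = monomial_ideal S"
  using monomial_ideal_subset_ideal_gen
    ideal_gen_minimal[OF is_ideal_monomial_ideal monomials_subset_monomial_ideal]
  by blast

definition exp_sums :: "('v \<Rightarrow>\<^sub>0 nat) set \<Rightarrow> nat \<Rightarrow> ('v \<Rightarrow>\<^sub>0 nat) set" where
  "exp_sums S t = {sum_list ds | ds. length ds = t \<and> set ds \<subseteq> S}"

lemma exp_sums_Cons:
  assumes "s \<in> S" "r \<in> exp_sums S t"
  shows "s + r \<in> exp_sums S (Suc t)"
proof -
  obtain ds where "r = sum_list ds" "length ds = t" "set ds \<subseteq> S"
    using assms(2) unfolding exp_sums_def by blast
  then show ?thesis
    using assms(1) unfolding exp_sums_def by (auto intro!: exI[of _ "s # ds"])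
qed

lemma prod_list_mem_monomial_ideal:
  assumes "set xs \<subseteq> monomial_ideal S"
  shows "prod_list xs \<in> monomial_ideal (exp_sums S (length xs))"
  using assms
proof (induction xs)
  case Nil
  have "(0 :: 'a \<Rightarrow>\<^sub>0 nat) \<in> exp_sums S 0"
    unfolding exp_sums_def by force
  then show ?case
    unfolding monomial_ideal_def mdvd_def by (auto intro!: bexI[of _ 0])
next
  case (Cons x xs)
  then have x: "x \<in> monomial_ideal S"
    and xs: "prod_list xs \<in> monomial_ideal (exp_sums S (length xs))" by auto
  show ?case
    unfolding monomial_ideal_def
  proof (simp, intro ballI)
    fix m assume "m \<in> Poly_Mapping.keys (x * prod_list xs)"
    then obtain y z where m: "m = y + z" "y \<in> Poly_Mapping.keys x"
      "z \<in> Poly_Mapping.keys (prod_list xs)"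
      using keys_mult[of x "prod_list xs"] by blast
    obtain s where "s \<in> S" "mdvd s y"
      using x m(2) unfolding monomial_ideal_def by blast
    moreover obtain r where "r \<in> exp_sums S (length xs)" "mdvd r z"
      using xs m(3) unfolding monomial_ideal_def by blast
    ultimately show "\<exists>s\<in>exp_sums S (Suc (length xs)). mdvd s m"
      using m(1) exp_sums_Cons mdvd_add_mono by blast
  qed
qed

lemma single_sum_list:
  "(Poly_Mapping.single (sum_list ds) 1 :: ('v, 'k::field) mpoly)
     = prod_list (map (\<lambda>d. Poly_Mapping.single d 1) ds)"
proof (induction ds)
  case (Cons d ds)
  have "Poly_Mapping.single (sum_list (d # ds)) 1
      = (Poly_Mapping.single d 1 * Poly_Mapping.single (sum_list ds) 1 :: ('v, 'k) mpoly)"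
    by (simp add: mult_single)
  with Cons.IH show ?case by simp
qed simp

lemma ideal_pow_monomial_ideal:
  "ideal_pow (monomial_ideal S :: ('v, 'k::field) mpoly set) t = monomial_ideal (exp_sums S t)"
proof
  show "ideal_pow (monomial_ideal S :: ('v, 'k) mpoly set) t \<subseteq> monomial_ideal (exp_sums S t)"
    unfolding ideal_pow_def
    by (rule ideal_gen_minimal[OF is_ideal_monomial_ideal]) (use prod_list_mem_monomial_ideal in blast)
next
  let ?products = "{prod_list xs | xs. length xs = t \<and> set xs \<subseteq> (monomial_ideal S :: ('v, 'k) mpoly set)}"
  have "monomials (exp_sums S t) \<subseteq> ?products"
  proof
    fix p :: "('v, 'k) mpoly" assume "p \<in> monomials (exp_sums S t)"
    then obtain ds where ds: "p = Poly_Mapping.single (sum_list ds) 1" "length ds = t" "set ds \<subseteq> S"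
      unfolding monomials_def exp_sums_def by blast
    have "set (map (\<lambda>d. Poly_Mapping.single d 1) ds) \<subseteq> (monomial_ideal S :: ('v, 'k) mpoly set)"
      using ds(3) monomials_subset_monomial_ideal unfolding monomials_def by fastforce
    then show "p \<in> ?products"
      using ds(1,2) single_sum_list[of ds] by (intro CollectI exI[of _ "map (\<lambda>d. Poly_Mapping.single d 1) ds"]) simp
  qed
  then have "ideal_gen (monomials (exp_sums S t)) \<subseteq> ideal_pow (monomial_ideal S :: ('v, 'k) mpoly set) t"
    unfolding ideal_pow_def by (intro ideal_gen_minimal[OF is_ideal_ideal_gen]) (use ideal_gen_superset in blast)
  then show "monomial_ideal (exp_sums S t) \<subseteq> ideal_pow (monomial_ideal S :: ('v, 'k) mpoly set) t"
    unfolding ideal_gen_monomials .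
qed

lemma lookup_mult_single_shift:
  "Poly_Mapping.lookup ((g :: ('v, 'k::field) mpoly) * Poly_Mapping.single e 1) (m + e)
     = Poly_Mapping.lookup g m"
proof -
  have "g * Poly_Mapping.single e 1
      = (\<Sum>k\<in>Poly_Mapping.keys g. Poly_Mapping.single (k + e) (Poly_Mapping.lookup g k))"
    by (subst poly_mapping_sum_singles[of g]) (simp add: sum_distrib_right mult_single)
  then show ?thesis
    by (simp add: lookup_sum lookup_single when_def in_keys_iff)
qed

lemma monomial_ideal_colon:
  assumes "\<And>m. (\<exists>s\<in>T. mdvd s (m + e)) \<longleftrightarrow> (\<exists>s\<in>S. mdvd s m)"
  shows "(g :: ('v, 'k::field) mpoly) * Poly_Mapping.single e 1 \<in> monomial_ideal T
           \<longleftrightarrow> g \<in> monomial_ideal S"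
proof
  assume "g * Poly_Mapping.single e 1 \<in> monomial_ideal T"
  moreover have "m + e \<in> Poly_Mapping.keys (g * Poly_Mapping.single e 1)"
    if "m \<in> Poly_Mapping.keys g" for m
    using that by (simp add: in_keys_iff lookup_mult_single_shift)
  ultimately show "g \<in> monomial_ideal S"
    using assms unfolding monomial_ideal_def by blast
next
  assume "g \<in> monomial_ideal S"
  moreover have "\<exists>x\<in>Poly_Mapping.keys g. m = x + e"
    if "m \<in> Poly_Mapping.keys (g * Poly_Mapping.single e 1)" for m
    using that keys_mult[of g "Poly_Mapping.single e 1"] by auto
  ultimately show "g * Poly_Mapping.single e 1 \<in> monomial_ideal T"
    using assms unfolding monomial_ideal_def by blast
qed

definition edge_exp :: "'v \<Rightarrow> 'v \<Rightarrow> ('v \<Rightarrow>\<^sub>0 nat)" where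
  "edge_exp u v = Poly_Mapping.single u 1 + Poly_Mapping.single v 1"

definition edge_exps :: "'v set set \<Rightarrow> ('v \<Rightarrow>\<^sub>0 nat) set" where
  "edge_exps E = {edge_exp u v | u v. {u, v} \<in> E}"

lemma lookup_edge_exp:
  "Poly_Mapping.lookup (edge_exp u v) w = (if w = u then 1 else 0) + (if w = v then 1 else 0)"
  unfolding edge_exp_def by (simp add: lookup_add lookup_single when_def)

lemma edge_ideal_monomial_ideal:
  "(edge_ideal E :: ('v, 'k::field) mpoly set) = monomial_ideal (edge_exps E)"
proof -
  have "{var u * var v | u v. {u, v} \<in> E} = (monomials (edge_exps E) :: ('v, 'k) mpoly set)"
    unfolding monomials_def edge_exps_def var_def edge_exp_def by (auto simp: mult_single)
  then show ?thesis
    unfolding edge_ideal_def by (simp add: ideal_gen_monomials)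
qed

lemma lookup_sum_list_eq_0:
  "(\<And>x. x \<in> set xs \<Longrightarrow> Poly_Mapping.lookup x w = 0) \<Longrightarrow> Poly_Mapping.lookup (sum_list xs) w = 0"
  by (induction xs) (simp_all add: lookup_add)

lemma sum_list_remove1:
  "x \<in> set xs \<Longrightarrow> sum_list xs = x + sum_list (remove1 x (xs :: 'a::comm_monoid_add list))"
  by (induction xs) (auto simp: ac_simps)

locale graph_with_leaf =
  fixes E :: "'v set set" and a b :: 'v
  assumes simple: "simple_graph E"
    and leaf_edge: "{b, a} \<in> E"
    and unique_neighbour: "\<And>w. {w, a} \<in> E \<Longrightarrow> w = b"
begin

lemma leaf_ne_neighbour: "a \<noteq> b"
  using simple leaf_edge unfolding simple_graph_def by fastforce

lemma leaf_edge_exp: "edge_exp a b \<in> edge_exps E"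
  unfolding edge_exps_def using leaf_edge by (auto simp: insert_commute)

lemma edge_exp_at_leaf:
  assumes "d \<in> edge_exps E" "Poly_Mapping.lookup d a \<noteq> 0"
  shows "d = edge_exp a b"
proof -
  obtain u v where d: "d = edge_exp u v" "{u, v} \<in> E"
    using assms(1) unfolding edge_exps_def by blast
  then consider "u = a" | "v = a"
    using assms(2) by (auto simp: lookup_edge_exp split: if_splits)
  then show ?thesis
  proof cases
    case 1
    then have "v = b" using d(2) unique_neighbour by (simp add: insert_commute)
    with 1 d(1) show ?thesis by simp
  next
    case 2
    then have "u = b" using d(2) unique_neighbour by simp
    with 2 d(1) show ?thesis by (simp add: edge_exp_def add.commute)
  qed
qed

text \<open>In every nonempty list of edges there is one that may be cancelled against
  e_ab in the sense of mdvd_cancel: e_ab itself if present; otherwise no edge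
  touches a, and we take an edge touching b if there is one.\<close>

lemma cancellable_edge:
  assumes "set ds \<subseteq> edge_exps E" "ds \<noteq> []"
  shows "\<exists>d\<in>set ds. \<forall>w. Poly_Mapping.lookup (edge_exp a b) w \<le> Poly_Mapping.lookup d w
                        \<or> Poly_Mapping.lookup (sum_list (remove1 d ds)) w = 0"
proof (cases "edge_exp a b \<in> set ds")
  case True
  then show ?thesis by auto
next
  case False
  have no_a: "Poly_Mapping.lookup x a = 0" if "x \<in> set ds" for x
    using that False assms(1) edge_exp_at_leaf by blast
  obtain d where d: "d \<in> set ds"
    and d_b: "(\<exists>x\<in>set ds. Poly_Mapping.lookup x b \<noteq> 0) \<Longrightarrow> Poly_Mapping.lookup d b \<noteq> 0"
    using assms(2) by (metis list.set_sel(1))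
  have rest_zero: "Poly_Mapping.lookup (sum_list (remove1 d ds)) w = 0"
    if "\<And>x. x \<in> set ds \<Longrightarrow> Poly_Mapping.lookup x w = 0" for w
    using that set_remove1_subset[of d ds] by (auto intro: lookup_sum_list_eq_0)
  have "Poly_Mapping.lookup (edge_exp a b) w \<le> Poly_Mapping.lookup d w
          \<or> Poly_Mapping.lookup (sum_list (remove1 d ds)) w = 0" for w
  proof -
    consider "w = a" | "w = b" "Poly_Mapping.lookup d b \<noteq> 0"
      | "w = b" "Poly_Mapping.lookup d b = 0" | "w \<noteq> a" "w \<noteq> b"
      by blast
    then show ?thesis
    proof cases
      case 1
      then show ?thesis using rest_zero[OF no_a] by simp
    next
      case 2
      then show ?thesis using leaf_ne_neighbour by (simp add: lookup_edge_exp)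
    next
      case 3
      then have "Poly_Mapping.lookup x b = 0" if "x \<in> set ds" for x
        using that d_b by blast
      then show ?thesis using rest_zero 3 by simp
    qed (simp add: lookup_edge_exp)
  qed
  with d show ?thesis by blast
qed

text \<open>The combinatorial heart of the colon formula (I^(t+1) : x_a x_b) = I^t.\<close>

lemma exp_sums_colon_leaf:
  "(\<exists>s\<in>exp_sums (edge_exps E) (Suc t). mdvd s (m + edge_exp a b))
     \<longleftrightarrow> (\<exists>s\<in>exp_sums (edge_exps E) t. mdvd s m)"
proof
  assume "\<exists>s\<in>exp_sums (edge_exps E) (Suc t). mdvd s (m + edge_exp a b)"
  then obtain ds where ds: "length ds = Suc t" "set ds \<subseteq> edge_exps E"
    and dvd: "mdvd (sum_list ds) (m + edge_exp a b)"
    unfolding exp_sums_def by blast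
  have "ds \<noteq> []"
    using ds(1) by auto
  then obtain d where d: "d \<in> set ds"
    and cover: "\<And>w. Poly_Mapping.lookup (edge_exp a b) w \<le> Poly_Mapping.lookup d w
                    \<or> Poly_Mapping.lookup (sum_list (remove1 d ds)) w = 0"
    using cancellable_edge[OF ds(2)] by auto
  have "mdvd (d + sum_list (remove1 d ds)) (m + edge_exp a b)"
    using dvd unfolding sum_list_remove1[OF d] .
  then have "mdvd (sum_list (remove1 d ds)) m"
    using cover by (rule mdvd_cancel)
  moreover have "sum_list (remove1 d ds) \<in> exp_sums (edge_exps E) t"
    unfolding exp_sums_def using ds d set_remove1_subset[of d ds]
    by (intro CollectI exI[of _ "remove1 d ds"]) (auto simp: length_remove1)
  ultimately show "\<exists>s\<in>exp_sums (edge_exps E) t. mdvd s m" by blast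
next
  assume "\<exists>s\<in>exp_sums (edge_exps E) t. mdvd s m"
  then obtain s where s: "s \<in> exp_sums (edge_exps E) t" "mdvd s m" by blast
  have "edge_exp a b + s \<in> exp_sums (edge_exps E) (Suc t)"
    using exp_sums_Cons[OF leaf_edge_exp s(1)] .
  moreover have "mdvd (edge_exp a b + s) (m + edge_exp a b)"
    using mdvd_add_mono[OF mdvd_refl[of "edge_exp a b"] s(2)] by (simp only: add.commute[of m])
  ultimately show "\<exists>s\<in>exp_sums (edge_exps E) (Suc t). mdvd s (m + edge_exp a b)"
    by blast
qed

end

theorem proposition4p20:
  fixes E :: "('v::finite) set set"
  assumes "simple_graph E" and "has_leaf E" and "t \<ge> 1"
  shows "Ass_quot (ideal_pow (edge_ideal E :: ('v, 'k::field) mpoly set) t)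
           \<subseteq> Ass_quot (ideal_pow (edge_ideal E :: ('v, 'k) mpoly set) (t + 1))"
proof -
  obtain a where "degree E a = 1"
    using assms(2) unfolding has_leaf_def by blast
  then obtain b where "{u. {u, a} \<in> E} = {b}"
    unfolding degree_def using card_1_singletonE by blast
  then interpret graph_with_leaf E a b
    by unfold_locales (use assms(1) in auto)
  have "g * Poly_Mapping.single (edge_exp a b) 1
          \<in> (ideal_pow (edge_ideal E) (t + 1) :: ('v, 'k) mpoly set)
        \<longleftrightarrow> g \<in> ideal_pow (edge_ideal E) t" for g
    unfolding edge_ideal_monomial_ideal ideal_pow_monomial_ideal Suc_eq_plus1[symmetric]
    by (rule monomial_ideal_colon[OF exp_sums_colon_leaf])
  then show ?thesis
    by (rule Ass_quot_subset_if_colon)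
qed

end
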